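(* Let $\varrho(N)$ be probability measures on $\hat U(N)$, $N\in\mathbb{N}$, such that $m_{N,PP(0)}[\varrho(N)]$ converges as $N\to\infty$ in probability, in the sense of moments, to a deterministic measure $\mu^{(0)}$ with moments $(\mu^{(0)}_k)_{k\ge0}$. Then for every $q\in[-1,1]$, $m_{N,PP(q)}[\varrho(N)]$ converges in probability, in the sense of moments, to a deterministic probability measure $\mu^{(q)}$ whose moments $(\mu^{(q)}_k)$ satisfy the identity of formal power series \[ \exp\Big(-q\sum_{k\ge0}\mu^{(0)}_kz^{k+1}\Big)=1-q\sum_{k\ge0}\mu^{(q)}_kz^{k+1}. \]
   Context: A signature of length $N$ is a tuple $\lambda=(\lambda_1\ge\dots\ge\lambda_N)\in\mathbb{Z}^N$; $\hat U(N)$ denotes the set of signatures of length $N$. For $q\in[-1,1]$ and $\lambda\in\hat U(N)$ the $q$-deformed Perelomov–Popov measure is \[ m_{N,PP(q)}[\lambda]=\frac1N\sum_{i=1}^N\Big(\prod_{j\ne i}\frac{(\lambda_i-i)-(\lambda_j-j)-q}{(\lambda_i-i)-(\lambda_j-j)}\Big)\delta\Big(\frac{\lambda_i+N-i}{N}\Big), \] and $m_{N,PP(q)}[\varrho(N)]$ denotes the random measure $m_{N,PP(q)}[\lambda]$ with $\lambda$ distributed according to $\varrho(N)$. Random measures $m_N$ converge in probability in the sense of moments to a deterministic measure $\mu$ if for every $k$, $\int t^k m_N(dt)\to\int t^k\mu(dt)$ in probability. *)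

theory Defs
  imports "HOL-Probability.Probability" "HOL-Computational_Algebra.Formal_Power_Series"
begin

text \<open>Signatures of length N, represented as integer lists (0-based indices:
  list position i corresponds to the paper's index i+1).\<close>
definition signatures :: "nat \<Rightarrow> int list set" where
  "signatures N = {l. length l = N \<and> sorted_wrt (\<ge>) l}"

definition pp_weight :: "real \<Rightarrow> nat \<Rightarrow> int list \<Rightarrow> nat \<Rightarrow> real" where
  "pp_weight q N l i =
     (1 / real N) * (\<Prod>j\<in>{0..<N} - {i}.
        (real_of_int ((l!i - int i) - (l!j - int j)) - q) / real_of_int ((l!i - int i) - (l!j - int j)))"

text \<open>Location of the atom with (0-based) index i: (lambda_i + N - i)/N with 1-based i.\<close>
definition pp_atom :: "nat \<Rightarrow> int list \<Rightarrow> nat \<Rightarrow> real" where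
  "pp_atom N l i = (real_of_int (l!i) + real N - real (i + 1)) / real N"

text \<open>k-th moment of the (finite, discrete, possibly signed) measure m_{N,PP(q)}[l],
  i.e. the integral of t^k against sum_i weight_i * delta(atom_i).\<close>
definition pp_moment :: "real \<Rightarrow> nat \<Rightarrow> int list \<Rightarrow> nat \<Rightarrow> real" where
  "pp_moment q N l k = (\<Sum>i<N. pp_weight q N l i * pp_atom N l i ^ k)"

definition pp_moments_converge_in_prob ::
  "real \<Rightarrow> (nat \<Rightarrow> int list pmf) \<Rightarrow> (nat \<Rightarrow> real) \<Rightarrow> bool" where
  "pp_moments_converge_in_prob q \<rho> c \<longleftrightarrow>
     (\<forall>k. \<forall>\<epsilon>>0. (\<lambda>N. measure_pmf.prob (\<rho> N) {l. \<bar>pp_moment q N l k - c k\<bar> > \<epsilon>})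
                    \<longlonglongrightarrow> 0)"

definition moment :: "real measure \<Rightarrow> nat \<Rightarrow> real" where
  "moment \<mu> k = (\<integral>t. t ^ k \<partial>\<mu>)"

end

theory Submission
  imports Defs "HOL-Computational_Algebra.Polynomial_FPS"
begin

text \<open>Write a(i) = (\<lambda>(i) + N - i)/N for the atoms of m_{N,PP(q)}[\<lambda>]. They are distinct, and
  its weights are 1/N times the Lagrange residues of the rational function
  \<Prod>(t - a(j) - q/N) / \<Prod>(t - a(j)). Hence the series H(z) = 1 - q z \<Sum> m_k z^k of its
  moments satisfies H(z) \<Prod>(1 - a(j) z) = \<Prod>(1 - (a(j) + q/N) z), so the logarithmic
  derivative of H is a combination of the power sums \<Sum> a(j)^r = N m_r^(0), with coefficients
  converging to those of the derivative of -q z \<Sum> \<mu>_k^(0) z^k. The resulting recursion for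
  the coefficients of H passes to the limit in probability, and the limiting recursion is the
  one satisfied by the coefficients of the exponential.

  For |q| \<le> 1 the weights are nonnegative and sum to 1. Realisations whose moments are close
  to the limits have bounded second moments, so by Helly's theorem a subsequence converges
  weakly; bounded even moments let all moments pass to the weak limit, which is \<mu>^(q).\<close>

definition lagrange_weight :: "nat \<Rightarrow> (nat \<Rightarrow> real) \<Rightarrow> real \<Rightarrow> nat \<Rightarrow> real" where
  "lagrange_weight N a e i = (\<Prod>j\<in>{..<N}-{i}. (a i - a j - e) / (a i - a j))"

lemma degree_prod_monic_linear:
  fixes c :: "nat \<Rightarrow> 'a::idom"
  shows "degree (\<Prod>j<N. [:c j, 1:]) = N \<and> coeff (\<Prod>j<N. [:c j, 1:]) N = 1"
proof -
  have d: "degree (\<Prod>j<N. [:c j, 1:]) = N"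
    by (subst degree_prod_eq_sum_degree) auto
  have "lead_coeff (\<Prod>j<N. [:c j, 1:]) = 1"
    by (simp add: lead_coeff_prod)
  with d show ?thesis by simp
qed

lemma degree_prod_shift_minus_prod_less:
  fixes a :: "nat \<Rightarrow> 'a::idom"
  assumes "N \<ge> 1"
  shows "degree ((\<Prod>j<N. [:-(a j + e), 1:]) - (\<Prod>j<N. [:- a j, 1:])) < N"
proof -
  define p where "p = (\<Prod>j<N. [:-(a j + e), 1:]) - (\<Prod>j<N. [:- a j, 1:])"
  note m1 = degree_prod_monic_linear[of "\<lambda>j. -(a j + e)" N]
    and m2 = degree_prod_monic_linear[of "\<lambda>j. - a j" N]
  have "degree p \<le> N" unfolding p_def using m1 m2 by (intro degree_diff_le) auto
  moreover have "coeff p N = 0" unfolding p_def using m1 m2 by simp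
  ultimately have "degree p < N"
    using assms by (cases "p = 0") (auto simp: le_less)
  then show ?thesis unfolding p_def .
qed

lemma poly_prod_shift_minus_prod_at_node:
  assumes inj: "inj_on a {..<N}" and k: "k < N"
  shows "poly ((\<Prod>j<N. [:-(a j + e), 1:]) - (\<Prod>j<N. [:- a j, 1:])) (a k)
     = poly (\<Sum>i<N. smult (- e * lagrange_weight N a e i) (\<Prod>j\<in>{..<N}-{i}. [:- a j, 1:])) (a k)"
proof -
  have nz: "a k - a j \<noteq> 0" if "j \<in> {..<N}-{k}" for j
    using inj k that by (auto dest: inj_onD)
  have L1: "(\<Prod>j<N. a k - a j) = 0"
    using k by (intro prod_zero) auto
  have L2: "(\<Prod>j<N. a k - (a j + e)) = (a k - (a k + e)) * (\<Prod>j\<in>{..<N}-{k}. a k - (a j + e))"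
    using k by (subst prod.remove[of _ k]) auto
  have "(\<Sum>i\<in>{..<N}-{k}. (- e * lagrange_weight N a e i) * (\<Prod>j\<in>{..<N}-{i}. a k - a j)) = 0"
    using k by (intro sum.neutral ballI) (auto intro!: prod_zero)
  then have R0: "(\<Sum>i<N. (- e * lagrange_weight N a e i) * (\<Prod>j\<in>{..<N}-{i}. a k - a j))
        = (- e * lagrange_weight N a e k) * (\<Prod>j\<in>{..<N}-{k}. a k - a j)"
    using k by (subst sum.remove[of _ k]) auto
  have W: "lagrange_weight N a e k * (\<Prod>j\<in>{..<N}-{k}. a k - a j)
      = (\<Prod>j\<in>{..<N}-{k}. a k - (a j + e))"
    unfolding lagrange_weight_def prod.distrib[symmetric]
    by (intro prod.cong refl) (use nz in \<open>auto simp: field_simps\<close>)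
  show ?thesis
    using k L1 L2 R0 W by (simp add: poly_prod poly_sum algebra_simps)
qed

lemma prod_shift_minus_prod_lagrange:
  assumes inj: "inj_on a {..<N}" and N: "N \<ge> 1"
  shows "(\<Prod>j<N. [:-(a j + e), 1:]) - (\<Prod>j<N. [:- a j, 1:])
     = (\<Sum>i<N. smult (- e * lagrange_weight N a e i) (\<Prod>j\<in>{..<N}-{i}. [:- a j, 1:]))"
proof (rule poly_eqI_degree[where A = "a ` {..<N}"])
  fix x assume "x \<in> a ` {..<N}"
  then show "poly ((\<Prod>j<N. [:-(a j + e), 1:]) - (\<Prod>j<N. [:- a j, 1:])) x
     = poly (\<Sum>i<N. smult (- e * lagrange_weight N a e i) (\<Prod>j\<in>{..<N}-{i}. [:- a j, 1:])) x"
    using poly_prod_shift_minus_prod_at_node[OF inj] by blast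
next
  have cardA: "card (a ` {..<N}) = N" using inj by (simp add: card_image)
  then show "degree ((\<Prod>j<N. [:-(a j + e), 1:]) - (\<Prod>j<N. [:- a j, 1:])) < card (a ` {..<N})"
    using degree_prod_shift_minus_prod_less[OF N] by simp
  have "degree (\<Sum>i<N. smult (- e * lagrange_weight N a e i) (\<Prod>j\<in>{..<N}-{i}. [:- a j, 1:]))
      \<le> N - 1"
  proof (intro degree_sum_le)
    fix i assume i: "i \<in> {..<N}"
    have "degree (smult (- e * lagrange_weight N a e i) (\<Prod>j\<in>{..<N}-{i}. [:- a j, 1:]))
        \<le> degree (\<Prod>j\<in>{..<N}-{i}. [:- a j, 1:])" by (rule degree_smult_le)
    also have "\<dots> \<le> sum (degree \<circ> (\<lambda>j. [:- a j, 1:])) ({..<N}-{i})"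
      by (intro degree_prod_sum_le) auto
    also have "\<dots> = N - 1" using i by simp
    finally show "degree (smult (- e * lagrange_weight N a e i) (\<Prod>j\<in>{..<N}-{i}. [:- a j, 1:]))
        \<le> N - 1" .
  qed auto
  then show "degree (\<Sum>i<N. smult (- e * lagrange_weight N a e i) (\<Prod>j\<in>{..<N}-{i}. [:- a j, 1:]))
      < card (a ` {..<N})"
    using N cardA by linarith
qed

lemma reversed_prod_shift_minus_prod_lagrange:
  assumes inj: "inj_on a {..<N}" and N: "N \<ge> 1"
  shows "(\<Prod>j<N. [:1, -(a j + e):]) - (\<Prod>j<N. [:1, - a j:])
     = (\<Sum>i<N. smult (- e * lagrange_weight N a e i) ([:0,1:] * (\<Prod>j\<in>{..<N}-{i}. [:1, - a j:])))"
proof -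
  note T = arg_cong[OF prod_shift_minus_prod_lagrange[OF inj N, of e], of poly]
  have "poly ((\<Prod>j<N. [:1, -(a j + e):]) - (\<Prod>j<N. [:1, - a j:])) x
     = poly (\<Sum>i<N. smult (- e * lagrange_weight N a e i)
                ([:0,1:] * (\<Prod>j\<in>{..<N}-{i}. [:1, - a j:]))) x" for x
  proof (cases "x = 0")
    case True then show ?thesis by (simp add: poly_prod poly_sum)
  next
    case False
    have reverse: "(\<Prod>j\<in>S. poly [:1, d j:] x) = x ^ card S * (\<Prod>j\<in>S. poly [:d j, 1:] (1/x))"
      for S d
    proof -
      have "(\<Prod>j\<in>S. poly [:1, d j:] x) = (\<Prod>j\<in>S. x * poly [:d j, 1:] (1/x))"
        using False by (intro prod.cong refl) (simp add: field_simps)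
      then show ?thesis by (simp add: prod.distrib)
    qed
    have [simp]: "poly [:0,1:] x = x" by simp
    have xN: "x ^ N = x * x ^ (N - 1)" using N by (cases N) auto
    have "poly ((\<Prod>j<N. [:1, -(a j + e):]) - (\<Prod>j<N. [:1, - a j:])) x
       = x ^ N * poly ((\<Prod>j<N. [:-(a j + e), 1:]) - (\<Prod>j<N. [:- a j, 1:])) (1/x)"
      by (simp only: poly_diff poly_prod reverse right_diff_distrib card_lessThan)
    also have "\<dots> = x ^ N * poly (\<Sum>i<N. smult (- e * lagrange_weight N a e i)
                                  (\<Prod>j\<in>{..<N}-{i}. [:- a j, 1:])) (1/x)"
      by (simp only: T)
    also have "\<dots> = poly (\<Sum>i<N. smult (- e * lagrange_weight N a e i)
                         ([:0,1:] * (\<Prod>j\<in>{..<N}-{i}. [:1, - a j:]))) x"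
      by (simp only: poly_sum poly_smult poly_mult poly_prod reverse sum_distrib_left)
         (simp add: card_Diff_singleton xN mult_ac del: poly_pCons)
    finally show ?thesis .
  qed
  then show ?thesis by (intro poly_eq_poly_eq_iff[THEN iffD1] ext)
qed

definition geom_fps :: "real \<Rightarrow> real fps" where
  "geom_fps c = Abs_fps (\<lambda>k. c ^ k)"

definition linear_fps :: "real \<Rightarrow> real fps" where
  "linear_fps c = 1 - fps_const c * fps_X"

definition linear_prod_fps :: "(nat \<Rightarrow> real) \<Rightarrow> nat \<Rightarrow> real fps" where
  "linear_prod_fps c N = (\<Prod>j<N. linear_fps (c j))"

definition linear_prod_logderiv :: "(nat \<Rightarrow> real) \<Rightarrow> nat \<Rightarrow> real fps" where
  "linear_prod_logderiv c N = (\<Sum>j<N. - (fps_const (c j) * geom_fps (c j)))"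

lemma geom_fps_mult_linear_fps: "geom_fps c * linear_fps c = 1"
proof -
  have "fps_nth (geom_fps c * linear_fps c) n = fps_nth (1::real fps) n" for n
    unfolding linear_fps_def geom_fps_def
    by (cases n) (simp_all add: right_diff_distrib mult.assoc[symmetric])
  then show ?thesis by (simp add: fps_eq_iff)
qed

lemma fps_of_poly_linear_fps: "fps_of_poly [:1, - c:] = linear_fps c"
  by (simp add: fps_of_poly_linear' linear_fps_def)

lemma linear_prod_fps_shift_minus:
  assumes inj: "inj_on a {..<N}" and N: "N \<ge> 1"
  shows "linear_prod_fps (\<lambda>j. a j + e) N - linear_prod_fps a N
     = (\<Sum>i<N. fps_const (- e * lagrange_weight N a e i) * fps_X
                * (\<Prod>j\<in>{..<N}-{i}. linear_fps (a j)))"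
proof -
  have "fps_of_poly ((\<Prod>j<N. [:1, -(a j + e):]) - (\<Prod>j<N. [:1, - a j:]))
     = fps_of_poly (\<Sum>i<N. smult (- e * lagrange_weight N a e i)
                      ([:0,1:] * (\<Prod>j\<in>{..<N}-{i}. [:1, - a j:])))"
    by (simp only: reversed_prod_shift_minus_prod_lagrange[OF inj N])
  then show ?thesis
    by (simp only: fps_of_poly_diff fps_of_poly_prod fps_of_poly_sum fps_of_poly_smult
       fps_of_poly_mult fps_of_poly_linear_fps fps_of_poly_fps_X linear_prod_fps_def mult.assoc)
qed

lemma geom_fps_mult_linear_prod_fps:
  assumes "i < N"
  shows "geom_fps (a i) * linear_prod_fps a N = (\<Prod>j\<in>{..<N}-{i}. linear_fps (a j))"
  unfolding linear_prod_fps_def using assms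
  by (subst prod.remove[of _ i]) (auto simp: mult.assoc[symmetric] geom_fps_mult_linear_fps)

lemma Abs_fps_weighted_power_sum:
  "Abs_fps (\<lambda>k. \<Sum>i<N. v i * a i ^ k) = (\<Sum>i<N. fps_const (v i) * geom_fps (a i))"
  by (simp add: fps_eq_iff geom_fps_def fps_sum_nth)

lemma moment_fps_mult_linear_prod_fps:
  assumes inj: "inj_on a {..<N}" and N: "N \<ge> 1"
    and v: "\<And>i. i < N \<Longrightarrow> q * v i = e * lagrange_weight N a e i"
  shows "(1 - fps_const q * fps_X * Abs_fps (\<lambda>k. \<Sum>i<N. v i * a i ^ k)) * linear_prod_fps a N
     = linear_prod_fps (\<lambda>j. a j + e) N"
proof -
  define T where "T i = fps_const (e * lagrange_weight N a e i) * fps_X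
                          * (\<Prod>j\<in>{..<N}-{i}. linear_fps (a j))" for i
  have S: "fps_const q * fps_X * Abs_fps (\<lambda>k. \<Sum>i<N. v i * a i ^ k) * linear_prod_fps a N
     = (\<Sum>i<N. T i)"
    unfolding Abs_fps_weighted_power_sum sum_distrib_left sum_distrib_right
  proof (intro sum.cong refl)
    fix i assume i: "i \<in> {..<N}"
    have "fps_const q * fps_X * (fps_const (v i) * geom_fps (a i)) * linear_prod_fps a N
       = fps_const (q * v i) * fps_X * (geom_fps (a i) * linear_prod_fps a N)"
      by (simp add: mult_ac)
    also have "\<dots> = T i"
      using i v geom_fps_mult_linear_prod_fps[of i N a] by (simp add: T_def)
    finally show "fps_const q * fps_X * (fps_const (v i) * geom_fps (a i)) * linear_prod_fps a N
       = T i" .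
  qed
  have "(\<Sum>i<N. fps_const (- e * lagrange_weight N a e i) * fps_X
                * (\<Prod>j\<in>{..<N}-{i}. linear_fps (a j))) = - (\<Sum>i<N. T i)"
    unfolding T_def by (subst sum_negf[symmetric], intro sum.cong refl) (simp flip: fps_const_neg)
  then have "linear_prod_fps (\<lambda>j. a j + e) N = linear_prod_fps a N - (\<Sum>i<N. T i)"
    using linear_prod_fps_shift_minus[OF inj N, of e] by (simp add: algebra_simps)
  then show ?thesis unfolding left_diff_distrib S by simp
qed

lemma fps_deriv_linear_fps: "fps_deriv (linear_fps c) = linear_fps c * - (fps_const c * geom_fps c)"
proof -
  have "linear_fps c * - (fps_const c * geom_fps c) = - (fps_const c * (geom_fps c * linear_fps c))"
    by (simp only: mult_minus_right mult.assoc mult.commute mult.left_commute)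
  then show ?thesis by (simp only: geom_fps_mult_linear_fps mult_1_right) (simp add: linear_fps_def)
qed

lemma fps_deriv_linear_prod_fps:
  "fps_deriv (linear_prod_fps c N) = linear_prod_fps c N * linear_prod_logderiv c N"
proof (induction N)
  case 0 then show ?case by (simp add: linear_prod_fps_def linear_prod_logderiv_def)
next
  case (Suc N)
  have "linear_prod_fps c (Suc N) = linear_prod_fps c N * linear_fps (c N)"
    by (simp add: linear_prod_fps_def)
  moreover have "linear_prod_logderiv c (Suc N)
      = linear_prod_logderiv c N + - (fps_const (c N) * geom_fps (c N))"
    by (simp add: linear_prod_logderiv_def)
  ultimately show ?case using Suc fps_deriv_linear_fps[of "c N"]
    by (simp only: fps_deriv_mult) (simp add: algebra_simps)
qed

lemma fps_nth_linear_prod_fps_0: "fps_nth (linear_prod_fps c N) 0 = 1"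
  by (induction N) (simp_all add: linear_prod_fps_def linear_fps_def)

lemma fps_deriv_eq_mult_logderiv_diff:
  assumes "H * linear_prod_fps a N = linear_prod_fps b N"
  shows "fps_deriv H = H * (linear_prod_logderiv b N - linear_prod_logderiv a N)"
proof -
  have "fps_deriv (H * linear_prod_fps a N) = fps_deriv (linear_prod_fps b N)"
    using assms by simp
  then have "fps_deriv H * linear_prod_fps a N + H * (linear_prod_fps a N * linear_prod_logderiv a N)
      = linear_prod_fps b N * linear_prod_logderiv b N"
    by (simp only: fps_deriv_mult fps_deriv_linear_prod_fps) (simp add: algebra_simps)
  then have "(fps_deriv H - H * (linear_prod_logderiv b N - linear_prod_logderiv a N))
      * linear_prod_fps a N = 0"
    using assms by (simp add: algebra_simps)
  moreover have "linear_prod_fps a N \<noteq> 0" using fps_nth_linear_prod_fps_0[of a N] by auto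
  ultimately show ?thesis by simp
qed

lemma fps_nth_linear_prod_logderiv_diff:
  "fps_nth (linear_prod_logderiv b N - linear_prod_logderiv a N) k
     = (\<Sum>j<N. a j ^ Suc k - b j ^ Suc k)"
  by (simp add: linear_prod_logderiv_def fps_sum_nth geom_fps_def sum_subtractf sum_negf)

lemma fps_nth_Suc_if_deriv_eq_mult:
  fixes H D :: "'a::comm_semiring_1 fps"
  assumes "fps_deriv H = H * D"
  shows "of_nat (Suc n) * fps_nth H (Suc n) = (\<Sum>i\<le>n. fps_nth H i * fps_nth D (n - i))"
proof -
  have "fps_nth (fps_deriv H) n = fps_nth (H * D) n" using assms by simp
  then show ?thesis by (simp add: fps_mult_nth atLeast0AtMost)
qed

lemma sum_power_diff_shift_binomial:
  "(\<Sum>j<N. a j ^ Suc k - (a j + e) ^ Suc k)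
    = - (\<Sum>r\<le>k. of_nat (Suc k choose r) * e ^ (Suc k - r) * (\<Sum>j<N. (a j :: real) ^ r))"
proof -
  have "a j ^ Suc k - (a j + e) ^ Suc k
      = - (\<Sum>r\<le>k. of_nat (Suc k choose r) * a j ^ r * e ^ (Suc k - r))" for j
    by (simp only: binomial_ring[of "a j" e "Suc k"] sum.atMost_Suc) simp
  then show ?thesis
    by (simp add: sum_negf sum_distrib_left mult_ac) (rule sum.swap)
qed


definition sig_shift :: "int list \<Rightarrow> nat \<Rightarrow> int" where
  "sig_shift l i = l ! i - int i"

lemma sig_shift_strict_decreasing:
  assumes "l \<in> signatures N" "i < j" "j < N"
  shows "sig_shift l j < sig_shift l i"
  using sorted_wrt_nth_less[of "(\<ge>)" l i j] assms by (auto simp: signatures_def sig_shift_def)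

lemma sig_shift_neq:
  assumes "l \<in> signatures N" "i < N" "j < N" "i \<noteq> j"
  shows "sig_shift l i \<noteq> sig_shift l j"
proof (cases "i < j")
  case True
  then show ?thesis using sig_shift_strict_decreasing[OF assms(1) True assms(3)] by simp
next
  case False
  then have "j < i" using assms(4) by simp
  then show ?thesis using sig_shift_strict_decreasing[OF assms(1) _ assms(2)] by force
qed

lemma pp_atom_diff:
  "N > 0 \<Longrightarrow> pp_atom N l i - pp_atom N l j = real_of_int (sig_shift l i - sig_shift l j) / real N"
  by (simp add: pp_atom_def sig_shift_def diff_divide_distrib[symmetric])

lemma inj_on_pp_atom:
  assumes "l \<in> signatures N"
  shows "inj_on (pp_atom N l) {..<N}"
proof (rule inj_onI)
  fix i j assume ij: "i \<in> {..<N}" "j \<in> {..<N}" "pp_atom N l i = pp_atom N l j"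
  then have N: "N > 0" by auto
  have "real_of_int (sig_shift l i - sig_shift l j) / real N = 0"
    using pp_atom_diff[OF N, of l i j] ij by simp
  then show "i = j" using sig_shift_neq[OF assms] ij N by auto
qed

lemma pp_weight_eq_lagrange_weight:
  assumes "l \<in> signatures N" "i < N"
  shows "pp_weight q N l i = (1 / real N) * lagrange_weight N (pp_atom N l) (q / real N) i"
  unfolding pp_weight_def lagrange_weight_def atLeast0LessThan sig_shift_def[symmetric]
proof (intro arg_cong[where f = "\<lambda>x. (1 / real N) * x"] prod.cong refl)
  fix j assume j: "j \<in> {..<N} - {i}"
  have N: "N > 0" using assms by simp
  define d where "d = real_of_int (sig_shift l i - sig_shift l j)"
  have "d \<noteq> 0" using sig_shift_neq[OF assms, of j] j by (simp add: d_def)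
  moreover have "pp_atom N l i - pp_atom N l j = d / real N"
    using pp_atom_diff[OF N, of l i j] by (simp add: d_def)
  ultimately show "(d - q) / d = (pp_atom N l i - pp_atom N l j - q / real N)
      / (pp_atom N l i - pp_atom N l j)"
    using N by (simp add: field_simps)
qed

lemma pp_weight_0:
  assumes "l \<in> signatures N" "i < N"
  shows "pp_weight 0 N l i = 1 / real N"
proof -
  have "(\<Prod>j\<in>{..<N} - {i}. (real_of_int (sig_shift l i - sig_shift l j) - 0)
          / real_of_int (sig_shift l i - sig_shift l j)) = 1"
    using sig_shift_neq[OF assms] by (intro prod.neutral) auto
  then show ?thesis unfolding pp_weight_def atLeast0LessThan sig_shift_def[symmetric] by simp
qed

lemma sum_pp_atom_power:
  assumes "l \<in> signatures N" "N > 0"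
  shows "(\<Sum>j<N. pp_atom N l j ^ r) = real N * pp_moment 0 N l r"
  unfolding pp_moment_def using assms
  by (simp add: pp_weight_0 sum_distrib_left)

definition pp_series :: "real \<Rightarrow> nat \<Rightarrow> int list \<Rightarrow> real fps" where
  "pp_series q N l = 1 - fps_const q * fps_X * Abs_fps (pp_moment q N l)"

lemma fps_nth_pp_series_0: "fps_nth (pp_series q N l) 0 = 1"
  by (simp add: pp_series_def)

lemma fps_nth_pp_series_Suc: "fps_nth (pp_series q N l) (Suc n) = - q * pp_moment q N l n"
  by (simp add: pp_series_def mult.assoc)

lemma fps_deriv_pp_series:
  assumes "l \<in> signatures N" "N \<ge> 1"
  shows "fps_deriv (pp_series q N l) = pp_series q N l *
    (linear_prod_logderiv (\<lambda>j. pp_atom N l j + q / real N) N - linear_prod_logderiv (pp_atom N l) N)"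
proof (rule fps_deriv_eq_mult_logderiv_diff)
  have moments: "pp_moment q N l = (\<lambda>k. \<Sum>i<N. pp_weight q N l i * pp_atom N l i ^ k)"
    by (simp add: pp_moment_def fun_eq_iff)
  show "pp_series q N l * linear_prod_fps (pp_atom N l) N
      = linear_prod_fps (\<lambda>j. pp_atom N l j + q / real N) N"
    unfolding pp_series_def moments
    by (rule moment_fps_mult_linear_prod_fps[OF inj_on_pp_atom[OF assms(1)] assms(2)])
       (simp add: pp_weight_eq_lagrange_weight[OF assms(1)])
qed

text \<open>Expanding a^(k+1) - (a + q/N)^(k+1) binomially and using \<Sum> a(j)^r = N m_r^(0), the
  k-th coefficient of the logarithmic derivative of \<^const>\<open>pp_series\<close> is
  \<Sum>_{r \<le> k} shift_coeff q k N r * m_r^(0).\<close>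

definition shift_coeff :: "real \<Rightarrow> nat \<Rightarrow> nat \<Rightarrow> nat \<Rightarrow> real" where
  "shift_coeff q k N r = - (of_nat (Suc k choose r) * (q / real N) ^ (Suc k - r) * real N)"

lemma pp_series_recurrence:
  assumes "l \<in> signatures N" "N \<ge> 1"
  shows "real (Suc n) * fps_nth (pp_series q N l) (Suc n)
    = (\<Sum>i\<le>n. fps_nth (pp_series q N l) i *
         (\<Sum>r\<le>n - i. shift_coeff q (n - i) N r * pp_moment 0 N l r))"
proof -
  have "(\<Sum>j<N. pp_atom N l j ^ r) = real N * pp_moment 0 N l r" for r
    using sum_pp_atom_power assms by simp
  then show ?thesis
    using fps_nth_Suc_if_deriv_eq_mult[OF fps_deriv_pp_series[OF assms, of q], of n]
    by (simp only: fps_nth_linear_prod_logderiv_diff sum_power_diff_shift_binomial)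
       (simp add: shift_coeff_def sum_negf mult_ac)
qed

lemma pp_moment_0_eq_1:
  assumes "l \<in> signatures N" "N \<ge> 1"
  shows "pp_moment q N l 0 = 1"
proof (cases "q = 0")
  case True
  then show ?thesis using assms by (simp add: pp_moment_def pp_weight_0)
next
  case False
  have "pp_moment 0 N l 0 = 1" using assms by (simp add: pp_moment_def pp_weight_0)
  then have "- q * pp_moment q N l 0 = - q"
    using pp_series_recurrence[OF assms, of 0 q] assms
    by (simp add: fps_nth_pp_series_0 fps_nth_pp_series_Suc shift_coeff_def)
  then show ?thesis using False by simp
qed


definition conv_in_prob :: "(nat \<Rightarrow> 'a pmf) \<Rightarrow> (nat \<Rightarrow> 'a \<Rightarrow> real) \<Rightarrow> real \<Rightarrow> bool" where
  "conv_in_prob \<rho> X c \<longleftrightarrow>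
     (\<forall>\<epsilon>>0. (\<lambda>N. measure_pmf.prob (\<rho> N) {l. \<epsilon> < \<bar>X N l - c\<bar>}) \<longlonglongrightarrow> 0)"

lemma pp_moments_converge_in_prob_iff:
  "pp_moments_converge_in_prob q \<rho> c \<longleftrightarrow> (\<forall>k. conv_in_prob \<rho> (\<lambda>N l. pp_moment q N l k) (c k))"
  by (auto simp: pp_moments_converge_in_prob_def conv_in_prob_def)

lemma measure_pmf_tendsto_0_if_subset_Un:
  assumes "\<And>N. P N \<subseteq> A N \<union> B N"
    and "(\<lambda>N. measure_pmf.prob (\<rho> N) (A N)) \<longlonglongrightarrow> 0"
    and "(\<lambda>N. measure_pmf.prob (\<rho> N) (B N)) \<longlonglongrightarrow> 0"
  shows "(\<lambda>N. measure_pmf.prob (\<rho> N) (P N)) \<longlonglongrightarrow> 0"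
proof (rule tendsto_sandwich[where f = "\<lambda>_. 0"
      and h = "\<lambda>N. measure_pmf.prob (\<rho> N) (A N) + measure_pmf.prob (\<rho> N) (B N)"])
  have "measure_pmf.prob (\<rho> N) (P N) \<le> measure_pmf.prob (\<rho> N) (A N \<union> B N)" for N
    using assms(1) by (intro measure_pmf.finite_measure_mono) auto
  also have "\<dots> N \<le> measure_pmf.prob (\<rho> N) (A N) + measure_pmf.prob (\<rho> N) (B N)" for N
    by (intro measure_Un_le) auto
  finally show "\<forall>\<^sub>F N in sequentially. measure_pmf.prob (\<rho> N) (P N)
      \<le> measure_pmf.prob (\<rho> N) (A N) + measure_pmf.prob (\<rho> N) (B N)"
    by simp
  show "(\<lambda>N. measure_pmf.prob (\<rho> N) (A N) + measure_pmf.prob (\<rho> N) (B N)) \<longlonglongrightarrow> 0"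
    using tendsto_add[OF assms(2,3)] by simp
qed simp_all

lemma conv_in_prob_cong:
  assumes "conv_in_prob \<rho> X c"
    and "\<forall>\<^sub>F N in sequentially. \<forall>l\<in>set_pmf (\<rho> N). X N l = Y N l"
  shows "conv_in_prob \<rho> Y c"
  unfolding conv_in_prob_def
proof (intro allI impI)
  fix \<epsilon> :: real assume e: "\<epsilon> > 0"
  have "\<forall>\<^sub>F N in sequentially. measure_pmf.prob (\<rho> N) {l. \<epsilon> < \<bar>X N l - c\<bar>}
      = measure_pmf.prob (\<rho> N) {l. \<epsilon> < \<bar>Y N l - c\<bar>}"
    using assms(2)
  proof eventually_elim
    case (elim N)
    have "{l. \<epsilon> < \<bar>X N l - c\<bar>} \<inter> set_pmf (\<rho> N) = {l. \<epsilon> < \<bar>Y N l - c\<bar>} \<inter> set_pmf (\<rho> N)"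
      using elim by auto
    then show ?case by (metis measure_Int_set_pmf)
  qed
  with assms(1) e show "(\<lambda>N. measure_pmf.prob (\<rho> N) {l. \<epsilon> < \<bar>Y N l - c\<bar>}) \<longlonglongrightarrow> 0"
    unfolding conv_in_prob_def by (auto dest: tendsto_cong[THEN iffD1, rotated])
qed

lemma conv_in_prob_deterministic:
  assumes "f \<longlonglongrightarrow> c"
  shows "conv_in_prob \<rho> (\<lambda>N l. f N) c"
  unfolding conv_in_prob_def
proof (intro allI impI)
  fix \<epsilon> :: real assume e: "\<epsilon> > 0"
  have "\<forall>\<^sub>F N in sequentially. dist (f N) c < \<epsilon>" using tendstoD[OF assms e] .
  then have "\<forall>\<^sub>F N in sequentially. measure_pmf.prob (\<rho> N) {l. \<epsilon> < \<bar>f N - c\<bar>} = 0"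
    by eventually_elim (simp add: dist_real_def)
  then show "(\<lambda>N. measure_pmf.prob (\<rho> N) {l. \<epsilon> < \<bar>f N - c\<bar>}) \<longlonglongrightarrow> 0"
    by (rule tendsto_eventually)
qed

lemma conv_in_prob_const: "conv_in_prob \<rho> (\<lambda>N l. c) c"
  using conv_in_prob_deterministic[of "\<lambda>_. c" c \<rho>] by simp

lemma conv_in_prob_add:
  assumes "conv_in_prob \<rho> X a" "conv_in_prob \<rho> Y b"
  shows "conv_in_prob \<rho> (\<lambda>N l. X N l + Y N l) (a + b)"
  unfolding conv_in_prob_def
proof (intro allI impI)
  fix \<epsilon> :: real assume e: "\<epsilon> > 0"
  show "(\<lambda>N. measure_pmf.prob (\<rho> N) {l. \<epsilon> < \<bar>X N l + Y N l - (a + b)\<bar>}) \<longlonglongrightarrow> 0"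
  proof (rule measure_pmf_tendsto_0_if_subset_Un)
    show "{l. \<epsilon> < \<bar>X N l + Y N l - (a + b)\<bar>}
        \<subseteq> {l. \<epsilon>/2 < \<bar>X N l - a\<bar>} \<union> {l. \<epsilon>/2 < \<bar>Y N l - b\<bar>}" for N
    proof
      fix l assume "l \<in> {l. \<epsilon> < \<bar>X N l + Y N l - (a + b)\<bar>}"
      moreover have "\<bar>X N l + Y N l - (a + b)\<bar> \<le> \<bar>X N l - a\<bar> + \<bar>Y N l - b\<bar>" by arith
      ultimately show "l \<in> {l. \<epsilon>/2 < \<bar>X N l - a\<bar>} \<union> {l. \<epsilon>/2 < \<bar>Y N l - b\<bar>}" by auto
    qed
    show "(\<lambda>N. measure_pmf.prob (\<rho> N) {l. \<epsilon>/2 < \<bar>X N l - a\<bar>}) \<longlonglongrightarrow> 0"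
      and "(\<lambda>N. measure_pmf.prob (\<rho> N) {l. \<epsilon>/2 < \<bar>Y N l - b\<bar>}) \<longlonglongrightarrow> 0"
      using assms e half_gt_zero unfolding conv_in_prob_def by blast+
  qed
qed

lemma abs_mult_diff_le:
  fixes x y a b \<epsilon> :: real
  assumes e: "\<epsilon> > 0"
    and x: "\<bar>x - a\<bar> \<le> min 1 (\<epsilon> / (1 + \<bar>a\<bar> + \<bar>b\<bar>))"
    and y: "\<bar>y - b\<bar> \<le> min 1 (\<epsilon> / (1 + \<bar>a\<bar> + \<bar>b\<bar>))"
  shows "\<bar>x * y - a * b\<bar> \<le> \<epsilon>"
proof -
  define \<delta> where "\<delta> = min 1 (\<epsilon> / (1 + \<bar>a\<bar> + \<bar>b\<bar>))"
  have d0: "0 \<le> \<delta>" and d1: "\<delta> \<le> 1" using e by (simp_all add: \<delta>_def)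
  have "\<delta> \<le> \<epsilon> / (1 + \<bar>a\<bar> + \<bar>b\<bar>)" by (simp add: \<delta>_def)
  then have d2: "\<delta> * (1 + \<bar>a\<bar> + \<bar>b\<bar>) \<le> \<epsilon>" by (simp add: field_simps)
  have "\<bar>(x - a) * (y - b)\<bar> \<le> \<delta> * 1"
    unfolding abs_mult using x y d0 d1 by (intro mult_mono) (auto simp: \<delta>_def)
  moreover have "\<bar>a * (y - b)\<bar> \<le> \<bar>a\<bar> * \<delta>" "\<bar>b * (x - a)\<bar> \<le> \<bar>b\<bar> * \<delta>"
    unfolding abs_mult using x y by (auto intro!: mult_left_mono simp: \<delta>_def)
  moreover have "x * y - a * b = (x - a) * (y - b) + a * (y - b) + b * (x - a)"
    by (simp add: algebra_simps)
  ultimately have "\<bar>x * y - a * b\<bar> \<le> \<delta> * (1 + \<bar>a\<bar> + \<bar>b\<bar>)"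
    by (simp add: algebra_simps)
  with d2 show ?thesis by linarith
qed

lemma conv_in_prob_mult:
  assumes "conv_in_prob \<rho> X a" "conv_in_prob \<rho> Y b"
  shows "conv_in_prob \<rho> (\<lambda>N l. X N l * Y N l) (a * b)"
  unfolding conv_in_prob_def
proof (intro allI impI)
  fix \<epsilon> :: real assume e: "\<epsilon> > 0"
  define \<delta> where "\<delta> = min 1 (\<epsilon> / (1 + \<bar>a\<bar> + \<bar>b\<bar>))"
  have d: "\<delta> > 0" using e by (simp add: \<delta>_def)
  show "(\<lambda>N. measure_pmf.prob (\<rho> N) {l. \<epsilon> < \<bar>X N l * Y N l - a * b\<bar>}) \<longlonglongrightarrow> 0"
  proof (rule measure_pmf_tendsto_0_if_subset_Un)
    show "{l. \<epsilon> < \<bar>X N l * Y N l - a * b\<bar>}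
        \<subseteq> {l. \<delta> < \<bar>X N l - a\<bar>} \<union> {l. \<delta> < \<bar>Y N l - b\<bar>}" for N
    proof (rule subsetI, rule ccontr)
      fix l assume l: "l \<in> {l. \<epsilon> < \<bar>X N l * Y N l - a * b\<bar>}"
        "l \<notin> {l. \<delta> < \<bar>X N l - a\<bar>} \<union> {l. \<delta> < \<bar>Y N l - b\<bar>}"
      then have "\<bar>X N l - a\<bar> \<le> \<delta>" "\<bar>Y N l - b\<bar> \<le> \<delta>" by auto
      then have "\<bar>X N l * Y N l - a * b\<bar> \<le> \<epsilon>"
        using abs_mult_diff_le[OF e] unfolding \<delta>_def by blast
      then show False using l by simp
    qed
  qed (use assms d in \<open>auto simp: conv_in_prob_def\<close>)
qed

lemma conv_in_prob_sum:
  assumes "finite S" "\<And>i. i \<in> S \<Longrightarrow> conv_in_prob \<rho> (X i) (c i)"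
  shows "conv_in_prob \<rho> (\<lambda>N l. \<Sum>i\<in>S. X i N l) (\<Sum>i\<in>S. c i)"
  using assms
proof (induction S rule: finite_induct)
  case empty then show ?case using conv_in_prob_const[of \<rho> 0] by simp
next
  case (insert x F)
  then show ?case
    using conv_in_prob_add[of \<rho> "X x" "c x" "\<lambda>N l. \<Sum>i\<in>F. X i N l" "\<Sum>i\<in>F. c i"] by simp
qed

lemma shift_coeff_tendsto:
  assumes "r \<le> k"
  shows "(\<lambda>N. shift_coeff q k N r) \<longlonglongrightarrow> (if r = k then - (real (Suc k) * q) else 0)"
proof -
  have "\<forall>\<^sub>F N in sequentially. shift_coeff q k N r
      = - (of_nat (Suc k choose r) * q ^ (Suc k - r) * (1 / real N) ^ (k - r))"
    using eventually_gt_at_top[of 0]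
  proof eventually_elim
    case (elim N)
    have "Suc k - r = Suc (k - r)" using assms by simp
    then show ?case using elim unfolding shift_coeff_def by (simp add: power_divide field_simps)
  qed
  moreover have "(\<lambda>N. - (of_nat (Suc k choose r) * q ^ (Suc k - r) * (1 / real N) ^ (k - r)))
      \<longlonglongrightarrow> - (of_nat (Suc k choose r) * q ^ (Suc k - r) * 0 ^ (k - r))"
    by (intro tendsto_intros)
  moreover have "(0::real) ^ (k - r) = (if r = k then 1 else 0)" using assms by simp
  ultimately show ?thesis by (auto simp: tendsto_cong)
qed

lemma conv_in_prob_logderiv_coeff:
  assumes conv0: "\<And>r. conv_in_prob \<rho> (\<lambda>N l. pp_moment 0 N l r) (m0 r)"
  shows "conv_in_prob \<rho> (\<lambda>N l. \<Sum>r\<le>k. shift_coeff q k N r * pp_moment 0 N l r)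
           (- (real (Suc k) * q * m0 k))"
proof -
  have "conv_in_prob \<rho> (\<lambda>N l. \<Sum>r\<in>{..k}. shift_coeff q k N r * pp_moment 0 N l r)
      (\<Sum>r\<in>{..k}. (if r = k then - (real (Suc k) * q) else 0) * m0 r)"
    by (intro conv_in_prob_sum conv_in_prob_mult conv_in_prob_deterministic shift_coeff_tendsto
        conv0) auto
  moreover have "(\<Sum>r\<in>{..k}. (if r = k then - (real (Suc k) * q) else 0) * m0 r)
      = - (real (Suc k) * q * m0 k)"
    by (subst sum.cong[OF refl, where h = "\<lambda>r. if r = k then - (real (Suc k) * q) * m0 r else 0"])
      auto
  ultimately show ?thesis by simp
qed

lemma fps_exp_compose_recurrence:
  fixes G :: "real fps"
  assumes "fps_nth G 0 = 0"
  shows "real (Suc n) * fps_nth (fps_exp 1 oo G) (Suc n)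
     = (\<Sum>i\<le>n. fps_nth (fps_exp 1 oo G) i * fps_nth (fps_deriv G) (n - i))"
proof -
  have "fps_deriv (fps_exp 1 oo G) = (fps_exp 1 oo G) * fps_deriv G"
    using fps_compose_deriv[OF assms, of "fps_exp 1"] by (simp add: fps_exp_deriv)
  from fps_nth_Suc_if_deriv_eq_mult[OF this, of n] show ?thesis by simp
qed

lemma conv_in_prob_pp_series:
  assumes supp: "\<And>N. set_pmf (\<rho> N) \<subseteq> signatures N"
    and conv0: "\<And>r. conv_in_prob \<rho> (\<lambda>N l. pp_moment 0 N l r) (m0 r)"
  shows "conv_in_prob \<rho> (\<lambda>N l. fps_nth (pp_series q N l) n)
           (fps_nth (fps_exp 1 oo (fps_const (-q) * fps_X * Abs_fps m0)) n)"
proof (induction n rule: less_induct)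
  case (less n)
  define G where "G = fps_const (-q) * fps_X * Abs_fps m0"
  define E where "E = fps_exp 1 oo G"
  have G0: "fps_nth G 0 = 0" by (simp add: G_def)
  have G': "fps_nth (fps_deriv G) j = - (real (Suc j) * q * m0 j)" for j
    by (simp only: fps_deriv_nth) (simp add: G_def mult.assoc)
  show ?case
  proof (cases n)
    case 0 then show ?thesis using conv_in_prob_const[of \<rho> 1] by (simp add: fps_nth_pp_series_0)
  next
    case (Suc m)
    define D where "D N l k = (\<Sum>r\<le>k. shift_coeff q k N r * pp_moment 0 N l r)" for N l k
    have lim: "conv_in_prob \<rho>
        (\<lambda>N l. (1 / real (Suc m)) * (\<Sum>i\<in>{..m}. fps_nth (pp_series q N l) i * D N l (m - i)))
        ((1 / real (Suc m)) * (\<Sum>i\<in>{..m}. fps_nth E i * fps_nth (fps_deriv G) (m - i)))"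
      using Suc unfolding D_def G'
      by (intro conv_in_prob_mult conv_in_prob_const conv_in_prob_sum
          conv_in_prob_logderiv_coeff conv0) (auto intro!: less[folded G_def E_def])
    have rec: "\<forall>\<^sub>F N in sequentially. \<forall>l\<in>set_pmf (\<rho> N).
        (1 / real (Suc m)) * (\<Sum>i\<in>{..m}. fps_nth (pp_series q N l) i * D N l (m - i))
          = fps_nth (pp_series q N l) (Suc m)"
      using eventually_ge_at_top[of 1]
      by eventually_elim (use supp pp_series_recurrence in \<open>force simp: D_def field_simps\<close>)
    have rec_limit: "(1 / real (Suc m)) * (\<Sum>i\<in>{..m}. fps_nth E i * fps_nth (fps_deriv G) (m - i))
        = fps_nth E (Suc m)"
      using fps_exp_compose_recurrence[OF G0, of m, folded E_def] by (simp add: field_simps)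
    have "conv_in_prob \<rho> (\<lambda>N l. fps_nth (pp_series q N l) (Suc m)) (fps_nth E (Suc m))"
      using conv_in_prob_cong[OF lim rec] by (simp only: rec_limit)
    then show ?thesis unfolding Suc E_def G_def .
  qed
qed

lemma pp_moments_converge_in_prob_deformed:
  assumes supp: "\<And>N. set_pmf (\<rho> N) \<subseteq> signatures N"
    and conv0: "pp_moments_converge_in_prob 0 \<rho> m0"
  shows "\<exists>c. pp_moments_converge_in_prob q \<rho> c
           \<and> fps_exp 1 oo (fps_const (- q) * fps_X * Abs_fps m0) = 1 - fps_const q * fps_X * Abs_fps c"
proof (cases "q = 0")
  case True
  then show ?thesis using conv0 by (intro exI[of _ m0]) (simp add: fps_compose_0_right)
next
  case False
  define E where "E = fps_exp 1 oo (fps_const (- q) * fps_X * Abs_fps m0)"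
  define c where "c n = - fps_nth E (Suc n) / q" for n
  have "conv_in_prob \<rho> (\<lambda>N l. (- 1 / q) * fps_nth (pp_series q N l) (Suc k))
      ((- 1 / q) * fps_nth E (Suc k))" for k
    using conv0 unfolding pp_moments_converge_in_prob_iff E_def
    by (intro conv_in_prob_mult conv_in_prob_const conv_in_prob_pp_series[OF supp]) auto
  then have "pp_moments_converge_in_prob q \<rho> c"
    using False by (simp add: pp_moments_converge_in_prob_iff fps_nth_pp_series_Suc c_def)
  moreover have "E = 1 - fps_const q * fps_X * Abs_fps c"
    by (rule fps_ext, case_tac n) (use False in \<open>simp_all add: E_def c_def mult.assoc\<close>)
  ultimately show ?thesis unfolding E_def by blast
qed


lemma abs_power_le_1_plus_even_power: "\<bar>(t::real) ^ k\<bar> \<le> 1 + t ^ (2 * k)"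
proof (cases "\<bar>t\<bar> \<le> 1")
  case True
  then have "\<bar>t\<bar> ^ k \<le> 1" by (simp add: power_le_one)
  moreover have "0 \<le> t ^ (2 * k)" by (rule zero_le_even_power')
  ultimately show ?thesis unfolding power_abs by linarith
next
  case False
  then have "\<bar>t\<bar> ^ k \<le> \<bar>t\<bar> ^ (2 * k)" by (intro power_increasing) auto
  also have "\<dots> = t ^ (2 * k)" by (simp add: power_mult power_even_abs)
  finally show ?thesis by (simp add: power_abs)
qed

lemma integrable_if_nn_integral_le:
  assumes f: "f \<in> borel_measurable M" "\<And>t. 0 \<le> f t" and B: "0 \<le> B"
    and le: "(\<integral>\<^sup>+t. ennreal (f t) \<partial>M) \<le> ennreal B"
  shows "integrable M f \<and> (\<integral>t. f t \<partial>M) \<le> B"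
proof -
  have iM: "integrable M f"
    using f le by (intro integrableI_nonneg) (auto simp: top_unique less_top[symmetric])
  have "ennreal (\<integral>t. f t \<partial>M) \<le> ennreal B"
    using le f(2) by (subst nn_integral_eq_integral[OF iM, symmetric]) auto
  with B iM show ?thesis by (simp add: ennreal_le_iff)
qed

text \<open>Fatou's lemma for weak convergence, via Skorohod's representation.\<close>

lemma weak_conv_integral_le:
  fixes f :: "real \<Rightarrow> real"
  assumes \<mu>: "\<And>n. real_distribution (\<mu>s n)" and M: "real_distribution M"
    and wc: "weak_conv_m \<mu>s M"
    and f: "continuous_on UNIV f" "\<And>t. 0 \<le> f t"
    and int: "\<And>n. integrable (\<mu>s n) f" and B: "\<And>n. (\<integral>t. f t \<partial>\<mu>s n) \<le> B"
  shows "integrable M f \<and> (\<integral>t. f t \<partial>M) \<le> B"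
proof -
  obtain \<Omega> :: "real measure" and Ys :: "nat \<Rightarrow> real \<Rightarrow> real" and Y :: "real \<Rightarrow> real"
    where Ys: "\<forall>n. Ys n \<in> measurable \<Omega> borel"
      "\<forall>n. distr \<Omega> borel (Ys n) = \<mu>s n"
    and Y: "Y \<in> measurable \<Omega> lborel" "distr \<Omega> borel Y = M"
    and conv: "\<forall>x\<in>space \<Omega>. (\<lambda>n. Ys n x) \<longlonglongrightarrow> Y x"
    using Skorohod[OF \<mu> M wc] by blast
  have [measurable]: "Ys n \<in> borel_measurable \<Omega>" "Y \<in> borel_measurable \<Omega>"
    "f \<in> borel_measurable borel" for n
    using Ys Y f(1) by (auto intro: borel_measurable_continuous_onI)
  interpret M: real_distribution M by fact
  have fM: "f \<in> borel_measurable M" by measurable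
  have "0 \<le> (\<integral>t. f t \<partial>\<mu>s 0)" using f(2) by (intro integral_nonneg_AE) auto
  with B[of 0] have B0: "0 \<le> B" by linarith
  have "(\<integral>\<^sup>+t. ennreal (f t) \<partial>M) = (\<integral>\<^sup>+x. ennreal (f (Y x)) \<partial>\<Omega>)"
    unfolding Y(2)[symmetric] by (subst nn_integral_distr) auto
  also have "\<dots> = (\<integral>\<^sup>+x. liminf (\<lambda>n. ennreal (f (Ys n x))) \<partial>\<Omega>)"
  proof (rule nn_integral_cong)
    fix x assume x: "x \<in> space \<Omega>"
    have "(\<lambda>n. ennreal (f (Ys n x))) \<longlonglongrightarrow> ennreal (f (Y x))"
      using conv x f(1) by (intro tendsto_ennrealI continuous_on_tendsto_compose[of UNIV f]) auto
    then show "ennreal (f (Y x)) = liminf (\<lambda>n. ennreal (f (Ys n x)))"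
      using lim_imp_Liminf[OF sequentially_bot] by metis
  qed
  also have "\<dots> \<le> liminf (\<lambda>n. \<integral>\<^sup>+x. ennreal (f (Ys n x)) \<partial>\<Omega>)"
    by (rule nn_integral_liminf) simp
  also have "\<dots> \<le> ennreal B"
  proof (rule Liminf_le)
    show "\<forall>\<^sub>F n in sequentially. (\<integral>\<^sup>+x. ennreal (f (Ys n x)) \<partial>\<Omega>) \<le> ennreal B"
    proof (intro always_eventually allI)
      fix n
      have "(\<integral>\<^sup>+x. ennreal (f (Ys n x)) \<partial>\<Omega>) = (\<integral>\<^sup>+t. ennreal (f t) \<partial>\<mu>s n)"
        unfolding Ys(2)[rule_format, symmetric] by (subst nn_integral_distr) auto
      also have "\<dots> = ennreal (\<integral>t. f t \<partial>\<mu>s n)"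
        using f(2) by (intro nn_integral_eq_integral int) auto
      finally show "(\<integral>\<^sup>+x. ennreal (f (Ys n x)) \<partial>\<Omega>) \<le> ennreal B"
        using B[of n] by (simp add: ennreal_leI)
    qed
  qed simp
  finally show ?thesis by (rule integrable_if_nn_integral_le[OF fM f(2) B0])
qed

lemma integral_power_minus_truncation_le:
  assumes P: "real_distribution P" and R: "R > 0"
    and i1: "integrable P (\<lambda>t. t ^ k)" and i2: "integrable P (\<lambda>t. t ^ (2 * k))"
    and B: "(\<integral>t. t ^ (2 * k) \<partial>P) \<le> B"
  shows "\<bar>(\<integral>t. t ^ k \<partial>P) - (\<integral>t. max (- R) (min R (t ^ k)) \<partial>P)\<bar> \<le> B / R"
proof -
  interpret P: real_distribution P by fact
  have err: "\<bar>x - max (- R) (min R x)\<bar> \<le> x ^ 2 / R" for x :: real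
  proof (cases "\<bar>x\<bar> \<le> R")
    case False
    then have "R * \<bar>x\<bar> \<le> \<bar>x\<bar> * \<bar>x\<bar>" using R by (intro mult_right_mono) auto
    then have "\<bar>x\<bar> \<le> x ^ 2 / R" using R by (simp add: field_simps power2_eq_square)
    moreover have "\<bar>x - max (- R) (min R x)\<bar> \<le> \<bar>x\<bar>" using False R by auto
    ultimately show ?thesis by linarith
  qed auto
  have it: "integrable P (\<lambda>t. max (- R) (min R (t ^ k)))"
    using R by (intro P.integrable_const_bound[where B = R]) auto
  have "\<bar>(\<integral>t. t ^ k \<partial>P) - (\<integral>t. max (- R) (min R (t ^ k)) \<partial>P)\<bar>
      = \<bar>\<integral>t. t ^ k - max (- R) (min R (t ^ k)) \<partial>P\<bar>"
    using i1 it by (simp add: integral_diff)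
  also have "\<dots> \<le> (\<integral>t. t ^ (2 * k) / R \<partial>P)"
  proof (rule integral_abs_bound_integral)
    fix t show "\<bar>t ^ k - max (- R) (min R (t ^ k))\<bar> \<le> t ^ (2 * k) / R"
      using err[of "t ^ k"] by (simp add: power_mult[symmetric] mult.commute)
  qed (use i1 it i2 in auto)
  also have "\<dots> \<le> B / R" using B R by (simp add: divide_right_mono)
  finally show ?thesis .
qed

text \<open>Moments pass to weak limits when they converge: convergence bounds the even moments
  uniformly, which controls the error of truncating t^k at height R by B/R.\<close>

lemma weak_conv_moments:
  assumes \<mu>: "\<And>n. real_distribution (\<mu>s n)" and M: "real_distribution M"
    and wc: "weak_conv_m \<mu>s M"
    and int: "\<And>n k. integrable (\<mu>s n) (\<lambda>t. t ^ k)"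
    and lim: "\<And>k. (\<lambda>n. \<integral>t. t ^ k \<partial>\<mu>s n) \<longlonglongrightarrow> c k"
  shows "integrable M (\<lambda>t. t ^ k) \<and> (\<integral>t. t ^ k \<partial>M) = c k"
proof -
  interpret M: real_distribution M by fact
  obtain B where "0 < B" and Bn: "\<And>n. norm (\<integral>t. t ^ (2 * k) \<partial>\<mu>s n) \<le> B"
    using convergent_imp_Bseq[OF convergentI[OF lim[of "2 * k"]]] by (auto elim: BseqE)
  then have B: "B > 0" "\<And>n. (\<integral>t. t ^ (2 * k) \<partial>\<mu>s n) \<le> B" by auto
  have "continuous_on UNIV (\<lambda>t::real. t ^ (2 * k))" by (intro continuous_intros)
  then obtain iM2: "integrable M (\<lambda>t. t ^ (2 * k))" and BM: "(\<integral>t. t ^ (2 * k) \<partial>M) \<le> B"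
    using weak_conv_integral_le[OF \<mu> M wc _ zero_le_even_power' int B(2)] by blast
  have iMk: "integrable M (\<lambda>t. t ^ k)"
  proof (rule Bochner_Integration.integrable_bound)
    show "integrable M (\<lambda>t. 1 + t ^ (2 * k))" using iM2 by simp
    show "AE t in M. norm (t ^ k) \<le> norm (1 + t ^ (2 * k))"
      using abs_power_le_1_plus_even_power by (intro AE_I2) (simp add: add_nonneg_nonneg)
  qed simp
  have "(\<lambda>n. \<integral>t. t ^ k \<partial>\<mu>s n) \<longlonglongrightarrow> (\<integral>t. t ^ k \<partial>M)"
  proof (rule LIMSEQ_I)
    fix \<epsilon> :: real assume e: "\<epsilon> > 0"
    define R where "R = 3 * B / \<epsilon>"
    have R: "R > 0" and BR: "B / R = \<epsilon> / 3" using B(1) e by (simp_all add: R_def)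
    have "(\<lambda>n. \<integral>t. max (- R) (min R (t ^ k)) \<partial>\<mu>s n) \<longlonglongrightarrow> (\<integral>t. max (- R) (min R (t ^ k)) \<partial>M)"
      using R by (intro weak_conv_imp_integral_bdd_continuous_conv[OF \<mu> M wc, where B = R]
          continuous_intros) auto
    then obtain n0 where n0: "\<And>n. n \<ge> n0 \<Longrightarrow>
        \<bar>(\<integral>t. max (- R) (min R (t ^ k)) \<partial>\<mu>s n) - (\<integral>t. max (- R) (min R (t ^ k)) \<partial>M)\<bar> < \<epsilon> / 3"
      using LIMSEQ_D[of _ _ "\<epsilon> / 3"] e by (metis divide_pos_pos real_norm_def zero_less_numeral)
    have "\<bar>(\<integral>t. t ^ k \<partial>\<mu>s n) - (\<integral>t. t ^ k \<partial>M)\<bar> < \<epsilon>" if "n \<ge> n0" for n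
      using integral_power_minus_truncation_le[OF \<mu> R int int B(2), of n]
        integral_power_minus_truncation_le[OF M R iMk iM2 BM] n0[OF that] BR
      by arith
    then show "\<exists>n0. \<forall>n\<ge>n0. norm ((\<integral>t. t ^ k \<partial>\<mu>s n) - (\<integral>t. t ^ k \<partial>M)) < \<epsilon>" by auto
  qed
  then have "(\<integral>t. t ^ k \<partial>M) = c k" using lim[of k] by (rule LIMSEQ_unique)
  with iMk show ?thesis by simp
qed

lemma tight_if_second_moments_bounded:
  assumes \<mu>: "\<And>n. real_distribution (\<mu>s n)"
    and int: "\<And>n. integrable (\<mu>s n) (\<lambda>t. t ^ 2)" and B: "\<And>n. (\<integral>t. t ^ 2 \<partial>\<mu>s n) \<le> B"
  shows "tight \<mu>s"
  unfolding tight_def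
proof (intro conjI allI impI \<mu>)
  fix \<epsilon> :: real assume e: "\<epsilon> > 0"
  define R where "R = \<bar>B\<bar> / \<epsilon> + 1"
  have R: "R \<ge> 1" using e by (simp add: R_def)
  have "\<bar>B\<bar> / R < \<epsilon>" using e by (simp add: R_def field_simps)
  moreover have "\<bar>B\<bar> / R ^ 2 \<le> \<bar>B\<bar> / R"
    using R by (intro divide_left_mono) (auto simp: power2_eq_square)
  ultimately have BR: "\<bar>B\<bar> / R ^ 2 < \<epsilon>" by linarith
  have "1 - \<epsilon> < measure (\<mu>s n) {- R<..R}" for n
  proof -
    interpret real_distribution "\<mu>s n" by (rule \<mu>)
    have "UNIV - {- R<..R} \<subseteq> {x \<in> space (\<mu>s n). R ^ 2 \<le> x ^ 2}"
      using R by (auto simp: abs_le_square_iff[symmetric])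
    then have "measure (\<mu>s n) (UNIV - {- R<..R}) \<le> measure (\<mu>s n) {x \<in> space (\<mu>s n). R ^ 2 \<le> x ^ 2}"
      by (intro finite_measure_mono) auto
    also have "\<dots> \<le> (\<integral>t. t ^ 2 \<partial>\<mu>s n) / R ^ 2"
      using R by (intro integral_Markov_inequality_measure[OF int, where A = UNIV]) auto
    also have "\<dots> \<le> \<bar>B\<bar> / R ^ 2" using B[of n] R by (intro divide_right_mono) auto
    finally show ?thesis using BR prob_compl[of "{- R<..R}"] by simp
  qed
  moreover have "- R < R" using R by simp
  ultimately show "\<exists>a b. a < b \<and> (\<forall>n. 1 - \<epsilon> < measure (\<mu>s n) {a<..b})" by blast
qed

text \<open>Helly's selection theorem applies because the second moments are bounded.\<close>

lemma limit_moments_distribution: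
  assumes \<mu>: "\<And>n. real_distribution (\<mu>s n)"
    and int: "\<And>n k. integrable (\<mu>s n) (\<lambda>t. t ^ k)"
    and lim: "\<And>k. (\<lambda>n. \<integral>t. t ^ k \<partial>\<mu>s n) \<longlonglongrightarrow> c k"
  shows "\<exists>M. real_distribution M \<and> (\<forall>k. integrable M (\<lambda>t. t ^ k) \<and> (\<integral>t. t ^ k \<partial>M) = c k)"
proof -
  obtain B where "0 < B" "\<And>n. norm (\<integral>t. t ^ 2 \<partial>\<mu>s n) \<le> B"
    using convergent_imp_Bseq[OF convergentI[OF lim[of 2]]] by (auto elim: BseqE)
  then have "tight \<mu>s"
    by (intro tight_if_second_moments_bounded[OF \<mu> int, where B = B]) auto
  from tight_imp_convergent_subsubsequence[OF this, of id]
  obtain r M where r: "strict_mono r" and M: "real_distribution M" and wc: "weak_conv_m (\<mu>s \<circ> r) M"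
    by (auto simp: strict_mono_def)
  have "integrable M (\<lambda>t. t ^ k) \<and> (\<integral>t. t ^ k \<partial>M) = c k" for k
    using LIMSEQ_subseq_LIMSEQ[OF lim r] \<mu> int
    by (intro weak_conv_moments[OF _ M wc]) (auto simp: o_def)
  with M show ?thesis by blast
qed

lemma pp_weight_nonneg:
  assumes "l \<in> signatures N" "i < N" "\<bar>q\<bar> \<le> 1"
  shows "0 \<le> pp_weight q N l i"
  unfolding pp_weight_def sig_shift_def[symmetric]
proof (intro mult_nonneg_nonneg prod_nonneg ballI)
  fix j assume "j \<in> {0..<N} - {i}"
  then have "sig_shift l i \<noteq> sig_shift l j" using sig_shift_neq[OF assms(1,2)] by auto
  then have "real_of_int (sig_shift l i - sig_shift l j) \<ge> 1
      \<or> real_of_int (sig_shift l i - sig_shift l j) \<le> -1" by linarith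
  then show "0 \<le> (real_of_int (sig_shift l i - sig_shift l j) - q)
      / real_of_int (sig_shift l i - sig_shift l j)"
    using assms(3) by (auto intro: divide_nonneg_pos divide_nonpos_neg)
qed simp

text \<open>For |q| \<le> 1 the weights are nonnegative, so m_{N,PP(q)}[\<lambda>] is the image of a pmf on
  the indices under the atom map.\<close>

definition pp_pmf :: "real \<Rightarrow> nat \<Rightarrow> int list \<Rightarrow> nat pmf" where
  "pp_pmf q N l = embed_pmf (\<lambda>i. if i < N then pp_weight q N l i else 0)"

definition pp_measure :: "real \<Rightarrow> nat \<Rightarrow> int list \<Rightarrow> real measure" where
  "pp_measure q N l = distr (measure_pmf (pp_pmf q N l)) borel (pp_atom N l)"

lemma pp_measure_distribution:
  assumes l: "l \<in> signatures N" and N: "N \<ge> 1" and q: "\<bar>q\<bar> \<le> 1"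
  shows "real_distribution (pp_measure q N l)" "integrable (pp_measure q N l) (\<lambda>t. t ^ k)"
    "(\<integral>t. t ^ k \<partial>pp_measure q N l) = pp_moment q N l k"
proof -
  define f where "f = (\<lambda>i. if i < N then pp_weight q N l i else 0)"
  have nn: "\<And>i. 0 \<le> f i" using pp_weight_nonneg[OF l _ q] by (simp add: f_def)
  have "(\<integral>\<^sup>+i. ennreal (f i) \<partial>count_space UNIV) = (\<Sum>i<N. ennreal (f i))"
    by (rule nn_integral_count_space') (auto simp: f_def)
  also have "\<dots> = ennreal (\<Sum>i<N. f i)" using nn by (simp add: sum_ennreal)
  also have "(\<Sum>i<N. f i) = pp_moment q N l 0" by (simp add: f_def pp_moment_def)
  finally have "(\<integral>\<^sup>+i. ennreal (f i) \<partial>count_space UNIV) = 1"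
    by (simp add: pp_moment_0_eq_1[OF l N])
  then have pmf: "pmf (pp_pmf q N l) i = f i" for i
    unfolding pp_pmf_def f_def[symmetric] using pmf_embed_pmf[of f] nn by blast
  then have set: "set_pmf (pp_pmf q N l) \<subseteq> {..<N}"
    by (auto simp: set_pmf_iff f_def split: if_splits)
  show "real_distribution (pp_measure q N l)"
    unfolding pp_measure_def
    by (auto simp: real_distribution_def real_distribution_axioms_def
        intro!: prob_space.prob_space_distr prob_space_measure_pmf)
  show "integrable (pp_measure q N l) (\<lambda>t. t ^ k)"
    unfolding pp_measure_def
    by (subst integrable_distr_eq) (auto intro!: integrable_measure_pmf_finite finite_subset[OF set])
  have "(\<integral>t. t ^ k \<partial>pp_measure q N l) = (\<integral>i. pp_atom N l i ^ k \<partial>measure_pmf (pp_pmf q N l))"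
    unfolding pp_measure_def by (subst integral_distr) auto
  also have "\<dots> = (\<Sum>i\<in>{..<N}. pmf (pp_pmf q N l) i *\<^sub>R pp_atom N l i ^ k)"
    by (rule integral_measure_pmf) (use set in auto)
  also have "\<dots> = pp_moment q N l k" by (simp add: pmf f_def pp_moment_def)
  finally show "(\<integral>t. t ^ k \<partial>pp_measure q N l) = pp_moment q N l k" .
qed

lemma conv_in_prob_sample:
  fixes X :: "nat \<Rightarrow> nat \<Rightarrow> 'a \<Rightarrow> real"
  assumes conv: "\<And>k. conv_in_prob \<rho> (X k) (c k)" and \<delta>: "\<delta> > 0"
  shows "\<exists>N\<ge>N0. \<exists>l\<in>set_pmf (\<rho> N). \<forall>k\<le>K. \<bar>X k N l - c k\<bar> \<le> \<delta>"
proof -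
  define A where "A N = (\<Union>k\<le>K. {l. \<delta> < \<bar>X k N l - c k\<bar>})" for N
  have lim: "(\<lambda>N. \<Sum>k\<le>K. measure_pmf.prob (\<rho> N) {l. \<delta> < \<bar>X k N l - c k\<bar>}) \<longlonglongrightarrow> 0"
    by (rule tendsto_null_sum) (use conv \<delta> in \<open>auto simp: conv_in_prob_def\<close>)
  have "\<forall>\<^sub>F N in sequentially.
      (\<Sum>k\<le>K. measure_pmf.prob (\<rho> N) {l. \<delta> < \<bar>X k N l - c k\<bar>}) < 1 \<and> N \<ge> N0"
    by (intro eventually_conj order_tendstoD(2)[OF lim] eventually_ge_at_top) simp
  then obtain N where N: "(\<Sum>k\<le>K. measure_pmf.prob (\<rho> N) {l. \<delta> < \<bar>X k N l - c k\<bar>}) < 1" "N \<ge> N0"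
    by (auto simp: eventually_sequentially)
  have "measure_pmf.prob (\<rho> N) (A N) < 1"
  proof -
    have "measure_pmf.prob (\<rho> N) (A N)
        \<le> (\<Sum>k\<le>K. measure_pmf.prob (\<rho> N) {l. \<delta> < \<bar>X k N l - c k\<bar>})"
      unfolding A_def by (rule measure_UNION_le) auto
    with N(1) show ?thesis by simp
  qed
  then have "measure_pmf.prob (\<rho> N) (UNIV - A N) \<noteq> 0"
    using measure_pmf.prob_compl[of "A N" "\<rho> N"] by simp
  then obtain l where "l \<in> set_pmf (\<rho> N)" "l \<notin> A N"
    unfolding measure_pmf_zero_iff by auto
  with N(2) show ?thesis by (auto simp: A_def not_less)
qed

lemma pp_measures_moments_tendsto:
  assumes supp: "\<And>N. set_pmf (\<rho> N) \<subseteq> signatures N" and q: "\<bar>q\<bar> \<le> 1"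
    and conv: "\<And>k. conv_in_prob \<rho> (\<lambda>N l. pp_moment q N l k) (c k)"
  shows "\<exists>\<mu>s. (\<forall>K. real_distribution (\<mu>s K) \<and> (\<forall>k. integrable (\<mu>s K) (\<lambda>t. t ^ k)))
           \<and> (\<forall>k. (\<lambda>K. \<integral>t. t ^ k \<partial>\<mu>s K) \<longlonglongrightarrow> c k)"
proof -
  have "\<forall>K. \<exists>Nl. fst Nl \<ge> 1 \<and> snd Nl \<in> set_pmf (\<rho> (fst Nl)) \<and>
      (\<forall>k\<le>K. \<bar>pp_moment q (fst Nl) (snd Nl) k - c k\<bar> \<le> 1 / (real K + 1))"
    using conv_in_prob_sample[OF conv, of "1 / (real _ + 1)" 1] by force
  then obtain g where g: "\<And>K. fst (g K) \<ge> 1" "\<And>K. snd (g K) \<in> set_pmf (\<rho> (fst (g K)))"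
    "\<And>K k. k \<le> K \<Longrightarrow> \<bar>pp_moment q (fst (g K)) (snd (g K)) k - c k\<bar> \<le> 1 / (real K + 1)"
    by metis
  define \<mu>s where "\<mu>s K = pp_measure q (fst (g K)) (snd (g K))" for K
  have sig: "snd (g K) \<in> signatures (fst (g K))" for K using g(2) supp by blast
  note \<mu> = pp_measure_distribution[OF sig g(1) q, folded \<mu>s_def]
  have "(\<lambda>K. \<integral>t. t ^ k \<partial>\<mu>s K) \<longlonglongrightarrow> c k" for k
  proof (rule tendsto_sandwich[where f = "\<lambda>K. c k - 1 / (real K + 1)"
        and h = "\<lambda>K. c k + 1 / (real K + 1)"])
    have "\<forall>\<^sub>F K in sequentially. \<bar>(\<integral>t. t ^ k \<partial>\<mu>s K) - c k\<bar> \<le> 1 / (real K + 1)"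
      using eventually_ge_at_top[of k] by eventually_elim (simp add: \<mu>(3) g(3))
    then show "\<forall>\<^sub>F K in sequentially. c k - 1 / (real K + 1) \<le> (\<integral>t. t ^ k \<partial>\<mu>s K)"
      and "\<forall>\<^sub>F K in sequentially. (\<integral>t. t ^ k \<partial>\<mu>s K) \<le> c k + 1 / (real K + 1)"
      by (auto elim!: eventually_mono)
    have "(\<lambda>K. 1 / (real K + 1)) \<longlonglongrightarrow> 0"
      using LIMSEQ_inverse_real_of_nat by (simp add: inverse_eq_divide add.commute)
    then show "(\<lambda>K. c k - 1 / (real K + 1)) \<longlonglongrightarrow> c k" "(\<lambda>K. c k + 1 / (real K + 1)) \<longlonglongrightarrow> c k"
      using tendsto_diff[OF tendsto_const] tendsto_add[OF tendsto_const] by fastforce+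
  qed
  with \<mu>(1,2) show ?thesis by blast
qed

theorem theorem26:
  fixes \<rho> :: "nat \<Rightarrow> int list pmf" and \<mu>0 :: "real measure"
  assumes supp: "\<And>N. set_pmf (\<rho> N) \<subseteq> signatures N"
    and mu0_borel: "sets \<mu>0 = sets borel"
    and mu0_fin: "finite_measure \<mu>0"
    and mu0_int: "\<And>k. integrable \<mu>0 (\<lambda>t. t ^ k)"
    and conv0: "pp_moments_converge_in_prob 0 \<rho> (moment \<mu>0)"
  shows "\<forall>q::real. -1 \<le> q \<and> q \<le> 1 \<longrightarrow>
    (\<exists>\<mu>q :: real measure. sets \<mu>q = sets borel \<and> prob_space \<mu>q
       \<and> (\<forall>k. integrable \<mu>q (\<lambda>t. t ^ k))
       \<and> pp_moments_converge_in_prob q \<rho> (moment \<mu>q)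
       \<and> fps_exp 1 oo (fps_const (- q) * fps_X * Abs_fps (moment \<mu>0))
           = 1 - fps_const q * fps_X * Abs_fps (moment \<mu>q))"
proof (intro allI impI)
  fix q :: real assume "-1 \<le> q \<and> q \<le> 1"
  then have q: "\<bar>q\<bar> \<le> 1" by auto
  obtain c where conv: "pp_moments_converge_in_prob q \<rho> c"
    and ident: "fps_exp 1 oo (fps_const (- q) * fps_X * Abs_fps (moment \<mu>0))
                  = 1 - fps_const q * fps_X * Abs_fps c"
    using pp_moments_converge_in_prob_deformed[OF supp conv0] by blast
  obtain \<mu>s where "\<And>K. real_distribution (\<mu>s K)" "\<And>K k. integrable (\<mu>s K) (\<lambda>t. t ^ k)"
    "\<And>k. (\<lambda>K. \<integral>t. t ^ k \<partial>\<mu>s K) \<longlonglongrightarrow> c k"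
    using pp_measures_moments_tendsto[OF supp q] conv
    unfolding pp_moments_converge_in_prob_iff by metis
  then obtain M where M: "real_distribution M"
    and mom: "\<And>k. integrable M (\<lambda>t. t ^ k) \<and> (\<integral>t. t ^ k \<partial>M) = c k"
    using limit_moments_distribution by metis
  interpret M: real_distribution M by fact
  have "moment M = c" using mom by (simp add: moment_def fun_eq_iff)
  with mom conv ident M.prob_space_axioms
  show "\<exists>\<mu>q :: real measure. sets \<mu>q = sets borel \<and> prob_space \<mu>q
       \<and> (\<forall>k. integrable \<mu>q (\<lambda>t. t ^ k))
       \<and> pp_moments_converge_in_prob q \<rho> (moment \<mu>q)
       \<and> fps_exp 1 oo (fps_const (- q) * fps_X * Abs_fps (moment \<mu>0))
           = 1 - fps_const q * fps_X * Abs_fps (moment \<mu>q)"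
    by (intro exI[of _ M]) auto
qed

end
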